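(* Let $g:\mathbb{Z}^d\to[0,\infty)$ be of the form $g(z)=\prod_{i=1}^d g_i(z_i)$, where each $g_i:\mathbb{Z}\to[0,\infty)$ is summable and log-concave. Let $f:\mathbb{Z}^d\to[0,\infty)$ be summable and log-supermodular. Then $f*g(x)=\sum_{z\in\mathbb{Z}^d}f(x-z)g(z)$ is log-supermodular on $\mathbb{Z}^d$.
   Context: A function $h:\mathbb{Z}\to[0,\infty)$ is log-concave if $\{h>0\}=I\cap\mathbb{Z}$ for some (possibly infinite) interval $I\subseteq\mathbb{R}$ and $h(n)^2\ge h(n+1)h(n-1)$ for all $n\in I$ (equivalently, $h$ admits a log-concave interpolation on $\mathbb{R}$). For $x,y\in\mathbb{Z}^d$, $(x\wedge y)_i=\min(x_i,y_i)$, $(x\vee y)_i=\max(x_i,y_i)$; $f$ is log-supermodular if $f(x)f(y)\le f(x\wedge y)f(x\vee y)$ for all $x,y\in\mathbb{Z}^d$. *)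

theory Defs
  imports "HOL-Analysis.Analysis"
begin

text \<open>Points of Z^d are represented as vectors of type int ^ 'd, with 'd a finite index type
  (d = CARD('d)).\<close>

definition vmin :: "int ^ 'd \<Rightarrow> int ^ 'd \<Rightarrow> int ^ 'd" where
  "vmin x y = (\<chi> i. min (x $ i) (y $ i))"

definition vmax :: "int ^ 'd \<Rightarrow> int ^ 'd \<Rightarrow> int ^ 'd" where
  "vmax x y = (\<chi> i. max (x $ i) (y $ i))"

definition log_supermodular :: "(int ^ 'd \<Rightarrow> real) \<Rightarrow> bool" where
  "log_supermodular f \<longleftrightarrow> (\<forall>x y. f x * f y \<le> f (vmin x y) * f (vmax x y))"

definition is_real_interval :: "real set \<Rightarrow> bool" where
  "is_real_interval I \<longleftrightarrow> (\<forall>a\<in>I. \<forall>b\<in>I. \<forall>c. a \<le> c \<and> c \<le> b \<longrightarrow> c \<in> I)"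

definition log_concave_int :: "(int \<Rightarrow> real) \<Rightarrow> bool" where
  "log_concave_int h \<longleftrightarrow> (\<exists>I. is_real_interval I \<and>
      {n. h n > 0} = {n. real_of_int n \<in> I} \<and>
      (\<forall>n. real_of_int n \<in> I \<longrightarrow> h n ^ 2 \<ge> h (n + 1) * h (n - 1)))"

definition conv :: "(int ^ 'd \<Rightarrow> real) \<Rightarrow> (int ^ 'd \<Rightarrow> real) \<Rightarrow> int ^ 'd \<Rightarrow> real" where
  "conv f g x = (\<Sum>\<^sub>\<infinity>z\<in>UNIV. f (x - z) * g z)"

end

theory Submission
  imports Defs
begin

(* Convolution with the product kernel g z = g_1 (z_1) * ... * g_d (z_d) can be carried out one
   coordinate axis at a time, so it suffices that convolving a bounded log-supermodular F with a
   log-concave h along a single axis preserves log-supermodularity. Log-concavity of h means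
   that the kernel (x, u) |-> h (x - u) is totally positive of order 2:
   h (x - s) h (y - t) <= h (min x y - min s t) h (max x y - max s t).
   Together with log-supermodularity of F this shows that the summands of the one-axis
   convolution at x, y, min x y and max x y satisfy the hypothesis of the one-dimensional
   four functions theorem, whose conclusion is the required inequality. *)

section \<open>The four functions theorem on a chain\<close>

lemma add_le_add_if_mult_le:
  fixes \<alpha> \<beta> \<gamma> \<delta> :: real
  assumes "\<alpha> \<le> \<gamma>" "\<beta> \<le> \<gamma>" "\<alpha> * \<beta> \<le> \<gamma> * \<delta>" "0 \<le> \<delta>"
  shows "\<alpha> + \<beta> \<le> \<gamma> + \<delta>"
proof (cases "\<gamma> > 0")
  case True
  have "\<gamma> * (\<alpha> + \<beta>) \<le> \<gamma> * \<gamma> + \<alpha> * \<beta>"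
    using mult_mono[of 0 "\<gamma> - \<alpha>" 0 "\<gamma> - \<beta>"] assms by (simp add: algebra_simps)
  also have "\<dots> \<le> \<gamma> * (\<gamma> + \<delta>)"
    using assms by (simp add: algebra_simps)
  finally show ?thesis
    using True by simp
next
  case False
  then show ?thesis
    using assms by linarith
qed

lemma has_sum_mult_product:
  fixes a :: "'a \<Rightarrow> real" and b :: "'b \<Rightarrow> real"
  assumes "(a has_sum s) A" "(b has_sum t) B" "\<And>x. x \<in> A \<Longrightarrow> 0 \<le> a x" "\<And>y. y \<in> B \<Longrightarrow> 0 \<le> b y"
  shows "((\<lambda>(x, y). a x * b y) has_sum s * t) (A \<times> B)"
proof -
  have fibre: "((\<lambda>y. a x * b y) has_sum a x * t) B" for x
    using assms(2) by (rule has_sum_cmult_right)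
  have sum: "((\<lambda>x. a x * t) has_sum s * t) A"
    using assms(1) by (rule has_sum_cmult_left)
  moreover have "(\<lambda>(x, y). a x * b y) summable_on A \<times> B"
    using fibre sum assms(3,4)
    by (intro summable_on_SigmaI[where g = "\<lambda>x. a x * t"]) (auto simp: summable_on_def)
  ultimately show ?thesis
    using fibre by (intro has_sum_SigmaI) auto
qed

lemma four_functions:
  fixes p1 p2 p3 p4 :: "'a::linorder \<Rightarrow> real"
  assumes nonneg: "\<And>s. 0 \<le> p1 s" "\<And>s. 0 \<le> p2 s" "\<And>s. 0 \<le> p3 s" "\<And>s. 0 \<le> p4 s"
    and summable: "p1 summable_on UNIV" "p2 summable_on UNIV" "p3 summable_on UNIV" "p4 summable_on UNIV"
    and le: "\<And>s t. p1 s * p2 t \<le> p3 (min s t) * p4 (max s t)"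
  shows "infsum p1 UNIV * infsum p2 UNIV \<le> infsum p3 UNIV * infsum p4 UNIV"
proof -
  have pair_le: "p1 s * p2 t + p2 s * p1 t \<le> p3 s * p4 t + p4 s * p3 t" if "s \<le> t" for s t
  proof -
    have "p1 s * p2 t + p1 t * p2 s \<le> p3 s * p4 t + p3 t * p4 s"
    proof (rule add_le_add_if_mult_le)
      show "p1 s * p2 t \<le> p3 s * p4 t" "p1 t * p2 s \<le> p3 s * p4 t"
        using le[of s t] le[of t s] that by (simp_all add: min_absorb1 min_absorb2 max_absorb1 max_absorb2)
      have "p1 s * p2 t * (p1 t * p2 s) = (p1 s * p2 s) * (p1 t * p2 t)"
        by simp
      also have "\<dots> \<le> (p3 s * p4 s) * (p3 t * p4 t)"
        using mult_mono[OF le[of s s] le[of t t]] nonneg by simp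
      also have "\<dots> = p3 s * p4 t * (p3 t * p4 s)"
        by simp
      finally show "p1 s * p2 t * (p1 t * p2 s) \<le> p3 s * p4 t * (p3 t * p4 s)" .
    qed (use nonneg in simp)
    then show ?thesis
      by (simp add: mult.commute)
  qed
  have pointwise: "p1 s * p2 t + p2 s * p1 t \<le> p3 s * p4 t + p4 s * p3 t" for s t
    using pair_le[of s t] pair_le[of t s] by (cases "s \<le> t") (simp_all add: algebra_simps)
  have sym_sum: "((\<lambda>(s, t). p s * q t + q s * p t)
      has_sum infsum p UNIV * infsum q UNIV + infsum q UNIV * infsum p UNIV) UNIV"
    if "p summable_on UNIV" "q summable_on UNIV" "\<And>s. 0 \<le> p s" "\<And>s. 0 \<le> q s"
    for p q :: "'a \<Rightarrow> real"
  proof -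
    have "((\<lambda>(s, t). p s * q t) has_sum infsum p UNIV * infsum q UNIV) UNIV"
      "((\<lambda>(s, t). q s * p t) has_sum infsum q UNIV * infsum p UNIV) UNIV"
      using has_sum_mult_product[OF has_sum_infsum[OF that(1)] has_sum_infsum[OF that(2)]]
        has_sum_mult_product[OF has_sum_infsum[OF that(2)] has_sum_infsum[OF that(1)]] that(3,4)
      by simp_all
    from has_sum_add[OF this] show ?thesis
      by (simp add: case_prod_unfold)
  qed
  have "infsum p1 UNIV * infsum p2 UNIV + infsum p2 UNIV * infsum p1 UNIV
      \<le> infsum p3 UNIV * infsum p4 UNIV + infsum p4 UNIV * infsum p3 UNIV"
    by (rule has_sum_mono[OF sym_sum sym_sum]) (simp_all add: summable nonneg pointwise split: prod.split)
  then show ?thesis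
    by (simp add: mult.commute)
qed

section \<open>Log-concave sequences\<close>

lemma concave_int_exchange:
  fixes L :: "int \<Rightarrow> real"
  assumes concave: "\<And>n. a < n \<Longrightarrow> n < d \<Longrightarrow> L (n + 1) + L (n - 1) \<le> 2 * L n"
    and "a \<le> b" "a \<le> c" "a + d = b + c"
  shows "L a + L d \<le> L b + L c"
proof -
  define D where "D n = L (n + 1) - L n" for n
  have D_antimono: "D (m + int k) \<le> D m" if "a \<le> m" "m + int k < d" for m k
    using that
  proof (induction k)
    case (Suc k)
    have "D (m + int (Suc k)) \<le> D (m + int k)"
      using concave[of "m + int (Suc k)"] Suc.prems by (simp add: D_def algebra_simps)
    also have "\<dots> \<le> D m"
      using Suc by simp
    finally show ?case .
  qed simp
  have telescope: "L (n + int k) - L n = (\<Sum>j<k. D (n + int j))" for n k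
    using sum_lessThan_telescope[of "\<lambda>j. L (n + int j)" k] by (simp add: D_def ac_simps)
  show ?thesis
    using assms(2-4)
  proof (induction b c rule: linorder_wlog)
    case (le b c)
    define k where "k = nat (b - a)"
    have b: "b = a + int k" and d: "d = c + int k"
      using le.prems by (simp_all add: k_def)
    have "(\<Sum>j<k. D (c + int j)) \<le> (\<Sum>j<k. D (a + int j))"
      using D_antimono[of "a + int _" "nat (c - a)"] le d
      by (intro sum_mono) (simp add: algebra_simps)
    then show ?case
      using telescope[of a k] telescope[of c k] b d by simp
  qed (simp add: ac_simps)
qed

lemma log_concave_int_support:
  assumes "log_concave_int h"
  obtains I where "is_real_interval I" "\<And>n. h n > 0 \<longleftrightarrow> real_of_int n \<in> I"
    "\<And>n. real_of_int n \<in> I \<Longrightarrow> h (n + 1) * h (n - 1) \<le> h n ^ 2"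
proof -
  obtain I where "is_real_interval I" "{n. h n > 0} = {n. real_of_int n \<in> I}"
    "\<And>n. real_of_int n \<in> I \<Longrightarrow> h (n + 1) * h (n - 1) \<le> h n ^ 2"
    using assms unfolding log_concave_int_def by blast
  then show ?thesis
    using that unfolding set_eq_iff by simp
qed

lemma log_concave_int_pos_between:
  assumes "log_concave_int h" "h a > 0" "h d > 0" "a \<le> n" "n \<le> d"
  shows "h n > 0"
proof -
  obtain I where "is_real_interval I" and "\<And>n. h n > 0 \<longleftrightarrow> real_of_int n \<in> I"
    using assms(1) log_concave_int_support by metis
  then show ?thesis
    using assms(2-) unfolding is_real_interval_def by (meson of_int_le_iff)
qed

lemma log_concave_int_sq:
  assumes "log_concave_int h" "h n > 0"
  shows "h (n + 1) * h (n - 1) \<le> h n ^ 2"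
  using assms by (metis log_concave_int_support)

lemma log_concave_int_exchange:
  fixes h :: "int \<Rightarrow> real"
  assumes nonneg: "\<And>n. 0 \<le> h n" and lc: "log_concave_int h"
    and "a \<le> b" "a \<le> c" "a + d = b + c"
  shows "h a * h d \<le> h b * h c"
proof (cases "h a > 0 \<and> h d > 0")
  case True
  then have pos: "h n > 0" if "a \<le> n" "n \<le> d" for n
    using log_concave_int_pos_between[OF lc] that by blast
  have "ln (h a) + ln (h d) \<le> ln (h b) + ln (h c)"
  proof (rule concave_int_exchange[OF _ assms(3-5)])
    fix n assume "a < n" "n < d"
    then have "h (n + 1) > 0" "h (n - 1) > 0" "h n > 0"
      using pos by auto
    moreover have "ln (h (n + 1) * h (n - 1)) \<le> ln (h n ^ 2)"
      using log_concave_int_sq[OF lc \<open>h n > 0\<close>] calculation by simp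
    ultimately show "ln (h (n + 1)) + ln (h (n - 1)) \<le> 2 * ln (h n)"
      by (simp add: ln_mult ln_realpow)
  qed
  moreover have "h b > 0" "h c > 0"
    using pos assms(3-5) by auto
  ultimately have "ln (h a * h d) \<le> ln (h b * h c)"
    using True by (simp add: ln_mult)
  then show ?thesis
    using True \<open>h b > 0\<close> \<open>h c > 0\<close> by simp
next
  case False
  then show ?thesis
    using nonneg[of a] nonneg[of d] nonneg[of b] nonneg[of c] by (auto simp: not_less)
qed

lemma log_concave_int_TP2:
  fixes h :: "int \<Rightarrow> real"
  assumes "\<And>n. 0 \<le> h n" "log_concave_int h"
  shows "h (x - s) * h (y - t) \<le> h (min x y - min s t) * h (max x y - max s t)"
proof -
  consider "x \<le> y \<longleftrightarrow> s \<le> t" | "x \<le> y" "t < s" | "y < x" "s \<le> t"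
    by linarith
  then show ?thesis
  proof cases
    case 1
    then show ?thesis
      by (cases "x \<le> y") (simp_all add: mult.commute)
  next
    case 2
    then show ?thesis
      using log_concave_int_exchange[OF assms, of "x - s" "x - t" "y - s" "y - t"]
      by (simp add: mult.commute)
  next
    case 3
    then show ?thesis
      using log_concave_int_exchange[OF assms, of "y - t" "y - s" "x - t" "x - s"]
      by (simp add: mult.commute)
  qed
qed

section \<open>Convolution along one axis\<close>

definition vec_upd :: "'a ^ 'n \<Rightarrow> 'n \<Rightarrow> 'a \<Rightarrow> 'a ^ 'n" where
  "vec_upd x i u = (\<chi> j. if j = i then u else x $ j)"

lemma vec_upd_nth [simp]: "vec_upd x i u $ j = (if j = i then u else x $ j)"
  by (simp add: vec_upd_def)

lemma vmin_nth [simp]: "vmin x y $ i = min (x $ i) (y $ i)"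
  by (simp add: vmin_def)

lemma vmax_nth [simp]: "vmax x y $ i = max (x $ i) (y $ i)"
  by (simp add: vmax_def)

lemma vmin_vec_upd: "vmin (vec_upd x i s) (vec_upd y i t) = vec_upd (vmin x y) i (min s t)"
  by (simp add: vec_eq_iff)

lemma vmax_vec_upd: "vmax (vec_upd x i s) (vec_upd y i t) = vec_upd (vmax x y) i (max s t)"
  by (simp add: vec_eq_iff)

lemma diff_axis_eq_vec_upd:
  fixes x :: "'a::ab_group_add ^ 'n"
  shows "x - axis i v = vec_upd x i (x $ i - v)"
  by (auto simp: vec_eq_iff axis_def)

definition axis_conv :: "(int \<Rightarrow> real) \<Rightarrow> 'd \<Rightarrow> (int ^ 'd \<Rightarrow> real) \<Rightarrow> int ^ 'd \<Rightarrow> real" where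
  "axis_conv h i F x = (\<Sum>\<^sub>\<infinity>v\<in>UNIV. h v * F (x - axis i v))"

lemma axis_conv_eq: "axis_conv h i F x = (\<Sum>\<^sub>\<infinity>u\<in>UNIV. h (x $ i - u) * F (vec_upd x i u))"
  unfolding axis_conv_def
  by (rule infsum_reindex_bij_witness[of UNIV "\<lambda>u. x $ i - u" "\<lambda>v. x $ i - v"])
     (simp_all add: diff_axis_eq_vec_upd)

lemma log_supermodular_axis_conv:
  fixes F :: "int ^ 'd \<Rightarrow> real" and h :: "int \<Rightarrow> real"
  assumes F_nonneg: "\<And>x. 0 \<le> F x" and F_lsm: "log_supermodular F" and F_le: "\<And>x. F x \<le> M"
    and h_nonneg: "\<And>n. 0 \<le> h n" and h_summable: "h summable_on UNIV" and h_lc: "log_concave_int h"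
  shows "log_supermodular (axis_conv h i F)"
  unfolding log_supermodular_def axis_conv_eq
proof (intro allI)
  fix x y :: "int ^ 'd"
  have slice_summable: "(\<lambda>u. h (w $ i - u) * F (vec_upd w i u)) summable_on UNIV" for w
  proof (rule summable_on_comparison_test)
    show "(\<lambda>u. M * h (w $ i - u)) summable_on UNIV"
      using h_summable
      by (intro summable_on_cmult_right)
         (subst summable_on_reindex_bij_witness[of UNIV "\<lambda>u. w $ i - u" "\<lambda>u. w $ i - u"], auto)
    show "h (w $ i - u) * F (vec_upd w i u) \<le> M * h (w $ i - u)" for u
      using mult_left_mono[OF F_le h_nonneg] by (simp add: mult.commute)
  qed (use h_nonneg F_nonneg in simp)
  show "(\<Sum>\<^sub>\<infinity>u\<in>UNIV. h (x $ i - u) * F (vec_upd x i u)) * (\<Sum>\<^sub>\<infinity>u\<in>UNIV. h (y $ i - u) * F (vec_upd y i u))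
    \<le> (\<Sum>\<^sub>\<infinity>u\<in>UNIV. h (vmin x y $ i - u) * F (vec_upd (vmin x y) i u)) *
      (\<Sum>\<^sub>\<infinity>u\<in>UNIV. h (vmax x y $ i - u) * F (vec_upd (vmax x y) i u))"
  proof (rule four_functions[OF _ _ _ _ slice_summable slice_summable slice_summable slice_summable])
    fix s t
    have h_TP2: "h (x $ i - s) * h (y $ i - t) \<le> h (vmin x y $ i - min s t) * h (vmax x y $ i - max s t)"
      using log_concave_int_TP2[OF h_nonneg h_lc] by simp
    have F_lsm_at: "F (vec_upd x i s) * F (vec_upd y i t)
        \<le> F (vec_upd (vmin x y) i (min s t)) * F (vec_upd (vmax x y) i (max s t))"
      using F_lsm unfolding log_supermodular_def by (metis vmin_vec_upd vmax_vec_upd)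
    have "(h (x $ i - s) * h (y $ i - t)) * (F (vec_upd x i s) * F (vec_upd y i t))
      \<le> (h (vmin x y $ i - min s t) * h (vmax x y $ i - max s t)) *
        (F (vec_upd (vmin x y) i (min s t)) * F (vec_upd (vmax x y) i (max s t)))"
      using h_nonneg F_nonneg by (intro mult_mono[OF h_TP2 F_lsm_at]) simp_all
    then show "h (x $ i - s) * F (vec_upd x i s) * (h (y $ i - t) * F (vec_upd y i t))
      \<le> h (vmin x y $ i - min s t) * F (vec_upd (vmin x y) i (min s t)) *
        (h (vmax x y $ i - max s t) * F (vec_upd (vmax x y) i (max s t)))"
      by (simp add: ac_simps)
  qed (use h_nonneg F_nonneg in simp_all)
qed

section \<open>Product kernels\<close>

definition prod_kernel :: "('d \<Rightarrow> int \<Rightarrow> real) \<Rightarrow> 'd set \<Rightarrow> int ^ 'd \<Rightarrow> real" where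
  "prod_kernel gs S z = (if \<forall>j. j \<notin> S \<longrightarrow> z $ j = 0 then \<Prod>j\<in>S. gs j (z $ j) else 0)"

lemma prod_kernel_nonneg: "(\<And>j n. 0 \<le> gs j n) \<Longrightarrow> 0 \<le> prod_kernel gs S z"
  by (simp add: prod_kernel_def prod_nonneg)

lemma prod_kernel_empty: "prod_kernel gs {} z = (if z = 0 then 1 else 0)"
  by (simp add: prod_kernel_def vec_eq_iff)

lemma prod_kernel_UNIV: "prod_kernel gs UNIV z = (\<Prod>j\<in>UNIV. gs j (z $ j))"
  by (simp add: prod_kernel_def)

lemma prod_kernel_eq_0: "i \<notin> S \<Longrightarrow> z $ i \<noteq> 0 \<Longrightarrow> prod_kernel gs S z = 0"
  by (auto simp: prod_kernel_def)

lemma prod_kernel_insert: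
  assumes "i \<notin> S" "w $ i = 0"
  shows "prod_kernel gs (insert i S) (axis i v + w) = gs i v * prod_kernel gs S w"
proof -
  have "(\<Prod>j\<in>S. gs j ((axis i v + w) $ j)) = (\<Prod>j\<in>S. gs j (w $ j))"
    using assms(1) by (intro prod.cong) (auto simp: axis_def)
  then show ?thesis
    using assms by (auto simp: prod_kernel_def axis_def)
qed

lemma has_sum_axis_split:
  fixes \<phi> :: "'a::ab_group_add ^ 'n \<Rightarrow> 'b::{comm_monoid_add,topological_space}"
  shows "(\<phi> has_sum s) UNIV \<longleftrightarrow> ((\<lambda>(v, w). \<phi> (axis i v + w)) has_sum s) (UNIV \<times> {w. w $ i = 0})"
  by (rule has_sum_reindex_bij_witness[of _ "\<lambda>(v, w). axis i v + w" "\<lambda>z. (z $ i, z - axis i (z $ i))"])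
     (auto simp: vec_eq_iff axis_def)

lemma has_sum_prod_kernel:
  fixes gs :: "'d::finite \<Rightarrow> int \<Rightarrow> real"
  assumes nonneg: "\<And>j n. 0 \<le> gs j n" and summable: "\<And>j. gs j summable_on UNIV"
  shows "(prod_kernel gs S has_sum (\<Prod>j\<in>S. infsum (gs j) UNIV)) UNIV"
  using finite[of S]
proof (induction S rule: finite_induct)
  case empty
  have "(prod_kernel gs {} has_sum 1) {0}"
    using has_sum_finite[of "{0}" "prod_kernel gs {}"] by (simp add: prod_kernel_empty)
  then show ?case
    by (subst has_sum_cong_neutral[where T = "{0}"]) (auto simp: prod_kernel_empty)
next
  case (insert i S)
  let ?W = "{w :: int ^ 'd. w $ i = 0}"
  have "(prod_kernel gs S has_sum (\<Prod>j\<in>S. infsum (gs j) UNIV)) ?W"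
    using insert.IH prod_kernel_eq_0[OF \<open>i \<notin> S\<close>]
    by (subst has_sum_cong_neutral[where T = UNIV]) auto
  then have "((\<lambda>(v, w). gs i v * prod_kernel gs S w) has_sum (\<Prod>j\<in>insert i S. infsum (gs j) UNIV)) (UNIV \<times> ?W)"
    using has_sum_mult_product[OF has_sum_infsum[OF summable] _ nonneg prod_kernel_nonneg[OF nonneg]]
    by (simp add: insert.hyps)
  also have "?this \<longleftrightarrow> ((\<lambda>(v, w). prod_kernel gs (insert i S) (axis i v + w))
      has_sum (\<Prod>j\<in>insert i S. infsum (gs j) UNIV)) (UNIV \<times> ?W)"
    by (rule has_sum_cong) (auto simp: prod_kernel_insert insert.hyps)
  finally show ?case
    by (subst has_sum_axis_split[of _ _ i])
qed

lemma le_infsum_nonneg: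
  fixes f :: "'a \<Rightarrow> real"
  assumes "\<And>x. 0 \<le> f x" "f summable_on UNIV"
  shows "f x \<le> infsum f UNIV"
  using finite_sum_le_infsum[of f UNIV "{x}"] assms by simp

lemma conv_has_sum:
  fixes f G :: "int ^ 'd \<Rightarrow> real"
  assumes f_nonneg: "\<And>x. 0 \<le> f x" and f_summable: "f summable_on UNIV"
    and G_nonneg: "\<And>z. 0 \<le> G z" and G_sum: "(G has_sum s) UNIV"
  shows "((\<lambda>z. f (x - z) * G z) has_sum conv f G x) UNIV"
proof -
  have "(\<lambda>z. f (x - z) * G z) summable_on UNIV"
  proof (rule summable_on_comparison_test)
    show "(\<lambda>z. infsum f UNIV * G z) summable_on UNIV"
      using has_sum_cmult_right[OF G_sum] by (auto simp: summable_on_def)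
    show "f (x - z) * G z \<le> infsum f UNIV * G z" for z
      by (rule mult_right_mono[OF le_infsum_nonneg[OF f_nonneg f_summable] G_nonneg])
  qed (simp add: f_nonneg G_nonneg)
  then show ?thesis
    unfolding conv_def by (rule has_sum_infsum)
qed

lemma conv_nonneg_le:
  fixes f G :: "int ^ 'd \<Rightarrow> real"
  assumes f_nonneg: "\<And>x. 0 \<le> f x" and f_summable: "f summable_on UNIV"
    and G_nonneg: "\<And>z. 0 \<le> G z" and G_sum: "(G has_sum s) UNIV"
  shows "0 \<le> conv f G x" "conv f G x \<le> infsum f UNIV * s"
proof -
  note conv_sum = conv_has_sum[OF assms]
  show "0 \<le> conv f G x"
    by (rule has_sum_nonneg[OF conv_sum]) (simp add: f_nonneg G_nonneg)
  show "conv f G x \<le> infsum f UNIV * s"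
    by (rule has_sum_mono[OF conv_sum has_sum_cmult_right[OF G_sum]])
       (simp add: mult_right_mono[OF le_infsum_nonneg[OF f_nonneg f_summable] G_nonneg])
qed

lemma conv_prod_kernel_empty: "conv f (prod_kernel gs {}) = f"
proof
  fix x
  have "conv f (prod_kernel gs {}) x = (\<Sum>\<^sub>\<infinity>z\<in>{0}. f (x - z) * prod_kernel gs {} z)"
    unfolding conv_def by (rule infsum_cong_neutral) (auto simp: prod_kernel_empty)
  then show "conv f (prod_kernel gs {}) x = f x"
    by (simp add: prod_kernel_empty)
qed

lemma conv_prod_kernel_insert:
  fixes f :: "int ^ 'd \<Rightarrow> real" and gs :: "'d \<Rightarrow> int \<Rightarrow> real"
  assumes gs_nonneg: "\<And>j n. 0 \<le> gs j n" and gs_summable: "\<And>j. gs j summable_on UNIV"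
    and f_nonneg: "\<And>x. 0 \<le> f x" and f_summable: "f summable_on UNIV" and "i \<notin> S"
  shows "conv f (prod_kernel gs (insert i S)) x = axis_conv (gs i) i (conv f (prod_kernel gs S)) x"
proof -
  let ?G = "prod_kernel gs S" and ?W = "{w :: int ^ 'd. w $ i = 0}"
  have conv_sum: "((\<lambda>z. f (y - z) * prod_kernel gs T z) has_sum conv f (prod_kernel gs T) y) UNIV"
    for y T
    using prod_kernel_nonneg[of gs, OF gs_nonneg] has_sum_prod_kernel[OF gs_nonneg gs_summable]
    by (rule conv_has_sum[OF f_nonneg f_summable])
  have sum_pairs: "((\<lambda>(v, w). gs i v * (f (x - axis i v - w) * ?G w))
      has_sum conv f (prod_kernel gs (insert i S)) x) (UNIV \<times> ?W)"
    using conv_sum[of x "insert i S"] unfolding has_sum_axis_split[of _ _ i]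
    by (rule has_sum_cong[THEN iffD1, rotated]) (auto simp: prod_kernel_insert \<open>i \<notin> S\<close> diff_diff_eq)
  have sum_fibres: "((\<lambda>w. gs i v * (f (x - axis i v - w) * ?G w))
      has_sum gs i v * conv f ?G (x - axis i v)) ?W" for v
  proof (rule has_sum_cmult_right)
    show "((\<lambda>w. f (x - axis i v - w) * ?G w) has_sum conv f ?G (x - axis i v)) ?W"
      using conv_sum[of "x - axis i v" S] prod_kernel_eq_0[OF \<open>i \<notin> S\<close>]
      by (subst has_sum_cong_neutral[where T = UNIV]) auto
  qed
  have "((\<lambda>v. gs i v * conv f ?G (x - axis i v))
      has_sum conv f (prod_kernel gs (insert i S)) x) UNIV"
    by (rule has_sum_SigmaD[OF sum_pairs]) (simp add: sum_fibres)
  then show ?thesis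
    unfolding axis_conv_def by (simp add: infsumI)
qed

lemma log_supermodular_conv_prod_kernel:
  fixes f :: "int ^ 'd \<Rightarrow> real" and gs :: "'d \<Rightarrow> int \<Rightarrow> real"
  assumes gs_nonneg: "\<And>j n. 0 \<le> gs j n" and gs_summable: "\<And>j. gs j summable_on UNIV"
    and gs_lc: "\<And>j. log_concave_int (gs j)"
    and f_nonneg: "\<And>x. 0 \<le> f x" and f_summable: "f summable_on UNIV" and f_lsm: "log_supermodular f"
  shows "log_supermodular (conv f (prod_kernel gs S))"
  using finite[of S]
proof (induction S rule: finite_induct)
  case empty
  then show ?case
    using f_lsm by (simp add: conv_prod_kernel_empty)
next
  case (insert i S)
  note conv_bounds = conv_nonneg_le[OF f_nonneg f_summable prod_kernel_nonneg[of gs, OF gs_nonneg]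
      has_sum_prod_kernel[OF gs_nonneg gs_summable]]
  have "log_supermodular (axis_conv (gs i) i (conv f (prod_kernel gs S)))"
    by (rule log_supermodular_axis_conv[OF conv_bounds(1) insert.IH conv_bounds(2)
          gs_nonneg gs_summable gs_lc])
  moreover have "conv f (prod_kernel gs (insert i S)) = axis_conv (gs i) i (conv f (prod_kernel gs S))"
    by (rule ext, rule conv_prod_kernel_insert[OF gs_nonneg gs_summable f_nonneg f_summable insert.hyps(2)])
  ultimately show ?case
    by simp
qed

theorem theorem3p5:
  fixes f g :: "int ^ 'd \<Rightarrow> real" and gs :: "'d \<Rightarrow> int \<Rightarrow> real"
  assumes g_prod: "\<And>z. g z = (\<Prod>i\<in>UNIV. gs i (z $ i))"
    and gs_nonneg: "\<And>i n. gs i n \<ge> 0"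
    and gs_summable: "\<And>i. gs i summable_on UNIV"
    and gs_lc: "\<And>i. log_concave_int (gs i)"
    and f_nonneg: "\<And>x. f x \<ge> 0"
    and f_summable: "f summable_on UNIV"
    and f_lsm: "log_supermodular f"
  shows "log_supermodular (conv f g)"
proof -
  have "g = prod_kernel gs UNIV"
    by (simp add: fun_eq_iff g_prod prod_kernel_UNIV)
  then show ?thesis
    using log_supermodular_conv_prod_kernel[OF gs_nonneg gs_summable gs_lc f_nonneg f_summable f_lsm]
    by simp
qed

end
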